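(* Let $G$ be a plane graph with at least $174$ vertices containing no subgraph isomorphic to $C_3\dot\cup\Theta_4$. Then for any two edges $e,f\in E_I(G)$ having no common endpoint, $|V(\Theta_e)\cap V(\Theta_f)|\ge 2$.
   Context: $\Theta_4$ is $K_4$ minus one edge and $C_3\dot\cup\Theta_4$ is its vertex-disjoint union with a triangle. For a plane graph $G$, a 3-face is a face whose boundary has length 3; $E_I(G)$ is the set of edges of $G$ that lie on the boundaries of two 3-faces. For $e\in E_I(G)$, $\Theta_e$ denotes the subgraph formed by the union of the two 3-faces incident with $e$ (a copy of $\Theta_4$ on four vertices). *)

theory Defs
  imports "HOL-Analysis.Analysis"
begin

text \<open>A finite simple graph with vertex set V and edge set E (edges are 2-element
  subsets of V), drawn in the plane (identified with the complex numbers):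
  vertex v is drawn at the point p v, edge e is drawn as the arc g e.\<close>

definition simple_graph :: "'a set \<Rightarrow> 'a set set \<Rightarrow> bool" where
  "simple_graph V E \<longleftrightarrow> finite V \<and> (\<forall>e\<in>E. \<exists>u v. u \<noteq> v \<and> u \<in> V \<and> v \<in> V \<and> e = {u, v})"

definition plane_embedding ::
  "'a set \<Rightarrow> 'a set set \<Rightarrow> ('a \<Rightarrow> complex) \<Rightarrow> ('a set \<Rightarrow> real \<Rightarrow> complex) \<Rightarrow> bool" where
  "plane_embedding V E p g \<longleftrightarrow>
     simple_graph V E \<and>
     inj_on p V \<and>
     (\<forall>e\<in>E. arc (g e) \<and> {pathstart (g e), pathfinish (g e)} = p ` e) \<and>
     (\<forall>e\<in>E. \<forall>v\<in>V. p v \<in> path_image (g e) \<longrightarrow> v \<in> e) \<and>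
     (\<forall>e\<in>E. \<forall>e'\<in>E. e \<noteq> e' \<longrightarrow> path_image (g e) \<inter> path_image (g e') \<subseteq> p ` (e \<inter> e'))"

definition drawing ::
  "'a set \<Rightarrow> 'a set set \<Rightarrow> ('a \<Rightarrow> complex) \<Rightarrow> ('a set \<Rightarrow> real \<Rightarrow> complex) \<Rightarrow> complex set" where
  "drawing V E p g = p ` V \<union> (\<Union>e\<in>E. path_image (g e))"

definition is_face ::
  "'a set \<Rightarrow> 'a set set \<Rightarrow> ('a \<Rightarrow> complex) \<Rightarrow> ('a set \<Rightarrow> real \<Rightarrow> complex) \<Rightarrow> complex set \<Rightarrow> bool" where
  "is_face V E p g F \<longleftrightarrow>
     (\<exists>x. x \<notin> drawing V E p g \<and> F = connected_component_set (- drawing V E p g) x)"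

definition three_face ::
  "'a set \<Rightarrow> 'a set set \<Rightarrow> ('a \<Rightarrow> complex) \<Rightarrow> ('a set \<Rightarrow> real \<Rightarrow> complex) \<Rightarrow> complex set \<Rightarrow> 'a set \<Rightarrow> bool" where
  "three_face V E p g F T \<longleftrightarrow>
     is_face V E p g F \<and> T \<subseteq> V \<and> card T = 3 \<and>
     (\<forall>u\<in>T. \<forall>v\<in>T. u \<noteq> v \<longrightarrow> {u, v} \<in> E) \<and>
     frontier F = (\<Union>e\<in>{e\<in>E. e \<subseteq> T}. path_image (g e))"

definition EI :: "'a set \<Rightarrow> 'a set set \<Rightarrow> ('a \<Rightarrow> complex) \<Rightarrow> ('a set \<Rightarrow> real \<Rightarrow> complex) \<Rightarrow> 'a set set" where
  "EI V E p g = {e\<in>E. \<exists>F1 F2 T1 T2. F1 \<noteq> F2 \<and> three_face V E p g F1 T1 \<and> three_face V E p g F2 T2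
                        \<and> e \<subseteq> T1 \<and> e \<subseteq> T2}"

text \<open>Containment of a (not necessarily induced) subgraph isomorphic to the disjoint
  union of a triangle and Theta_4 = K_4 minus an edge.\<close>
definition has_C3_Theta4 :: "'a set \<Rightarrow> 'a set set \<Rightarrow> bool" where
  "has_C3_Theta4 V E \<longleftrightarrow>
     (\<exists>a b c w x y z. distinct [a, b, c, w, x, y, z] \<and> {a, b, c, w, x, y, z} \<subseteq> V \<and>
        {a, b} \<in> E \<and> {b, c} \<in> E \<and> {a, c} \<in> E \<and>
        {w, x} \<in> E \<and> {w, y} \<in> E \<and> {w, z} \<in> E \<and> {x, y} \<in> E \<and> {x, z} \<in> E)"

end

theory Submission
  imports Defs
begin

text \<open>Two distinct 3-faces on the same triangle are the inside and the outside of its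
  Jordan curve, so together with the curve they cover the plane and the graph is just that
  triangle. Hence, once the graph has more than three vertices, the two 3-faces at an edge of
  \<open>E_I\<close> have different apexes and span a \<open>\<Theta>\<^sub>4\<close>. If the \<open>\<Theta>\<^sub>4\<close>s of \<open>e\<close> and \<open>f\<close> shared at most
  one vertex, each of the four triangles of one would have to meet the other (else a
  \<open>C\<^sub>3 \<union> \<Theta>\<^sub>4\<close> appears), so all four hits are that single vertex; it then lies on both \<open>e\<close>
  and \<open>f\<close>, which are disjoint.\<close>

lemma connected_frontier_eq_Jordan_inside_or_outside:
  fixes c :: "real \<Rightarrow> complex"
  assumes "simple_path c" "pathfinish c = pathstart c"
    and "connected F" "F \<noteq> {}" "F \<inter> path_image c = {}" "frontier F = path_image c"
  shows "F = inside (path_image c) \<or> F = outside (path_image c)"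
proof -
  let ?C = "path_image c"
  have J: "frontier (inside ?C) = ?C" "connected (inside ?C)" "connected (outside ?C)"
    using Jordan_inside_outside[OF assms(1,2)] by blast+
  have "F \<subseteq> inside ?C \<or> F \<subseteq> outside ?C"
  proof (rule ccontr)
    assume "\<not> ?thesis"
    then have "F \<inter> inside ?C \<noteq> {}" "F - inside ?C \<noteq> {}"
      using assms(5) inside_Un_outside[of ?C] by blast+
    then have "F \<inter> frontier (inside ?C) \<noteq> {}"
      using connected_Int_frontier assms(3) by blast
    then show False using assms(5) J(1) by blast
  qed
  moreover have "F = X" if "F \<subseteq> X" "connected X" "X \<inter> ?C = {}" for X
  proof (rule ccontr)
    assume "F \<noteq> X"
    then have "X \<inter> F \<noteq> {}" "X - F \<noteq> {}" using that(1) assms(4) by blast+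
    then have "X \<inter> frontier F \<noteq> {}" using connected_Int_frontier that(2) by blast
    then show False using assms(6) that(3) by blast
  qed
  moreover have "inside ?C \<inter> ?C = {}" "outside ?C \<inter> ?C = {}"
    using inside_Un_outside[of ?C] by blast+
  ultimately show ?thesis using J(2,3) by blast
qed

lemma plane_embedding_simple_graph:
  "plane_embedding V E p g \<Longrightarrow> simple_graph V E"
  by (simp add: plane_embedding_def)

lemma simple_graph_edgeE:
  assumes "simple_graph V E" "e \<in> E"
  obtains u v where "e = {u, v}" "u \<noteq> v"
  using assms unfolding simple_graph_def by blast

lemma simple_graph_edge_subset:
  assumes "simple_graph V E" "e \<in> E"
  shows "e \<subseteq> V"
  using assms unfolding simple_graph_def by auto

lemma plane_embedding_vertex_on_edge:
  assumes "plane_embedding V E p g" "e \<in> E" "v \<in> V" "p v \<in> path_image (g e)"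
  shows "v \<in> e"
  using assms unfolding plane_embedding_def by blast

lemma plane_embedding_edges_meet:
  assumes "plane_embedding V E p g" "e \<in> E" "e' \<in> E" "e \<noteq> e'"
  shows "path_image (g e) \<inter> path_image (g e') \<subseteq> p ` (e \<inter> e')"
  using assms unfolding plane_embedding_def by blast

lemma plane_embedding_edge_arc:
  assumes pe: "plane_embedding V E p g" and ab: "{a, b} \<in> E" "a \<noteq> b"
  obtains h where "arc h" "pathstart h = p a" "pathfinish h = p b"
    "path_image h = path_image (g {a, b})"
proof -
  have "a \<in> V" "b \<in> V"
    using simple_graph_edge_subset[OF plane_embedding_simple_graph[OF pe] ab(1)] by simp_all
  then have "p a \<noteq> p b" using pe ab(2) unfolding plane_embedding_def by (meson inj_onD)
  moreover have "arc (g {a, b})" "{pathstart (g {a, b}), pathfinish (g {a, b})} = {p a, p b}"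
    using pe ab(1) unfolding plane_embedding_def by auto
  ultimately show ?thesis
    using that by (metis arc_reversepath doubleton_eq_iff path_image_reversepath
        pathfinish_reversepath pathstart_reversepath)
qed

lemma plane_embedding_triangle_simple_loop:
  assumes pe: "plane_embedding V E p g"
    and E: "{a, b} \<in> E" "{b, c} \<in> E" "{c, a} \<in> E" and d: "a \<noteq> b" "b \<noteq> c" "c \<noteq> a"
  obtains h where "simple_path h" "pathfinish h = pathstart h"
    "path_image h = path_image (g {a, b}) \<union> path_image (g {b, c}) \<union> path_image (g {c, a})"
proof -
  obtain h1 where h1: "arc h1" "pathstart h1 = p a" "pathfinish h1 = p b"
      "path_image h1 = path_image (g {a, b})"
    using plane_embedding_edge_arc[OF pe E(1) d(1)] by blast
  obtain h2 where h2: "arc h2" "pathstart h2 = p b" "pathfinish h2 = p c"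
      "path_image h2 = path_image (g {b, c})"
    using plane_embedding_edge_arc[OF pe E(2) d(2)] by blast
  obtain h3 where h3: "arc h3" "pathstart h3 = p c" "pathfinish h3 = p a"
      "path_image h3 = path_image (g {c, a})"
    using plane_embedding_edge_arc[OF pe E(3) d(3)] by blast
  have ne: "{a, b} \<noteq> {b, c}" "{b, c} \<noteq> {c, a}" "{a, b} \<noteq> {c, a}"
    using d by (auto simp: doubleton_eq_iff)
  have "path_image h1 \<inter> path_image h2 \<subseteq> {pathstart h2}"
    "path_image h2 \<inter> path_image h3 \<subseteq> {pathstart h3}"
    "path_image h1 \<inter> path_image h3 \<subseteq> {pathstart h1} \<inter> {pathfinish h3}"
    using plane_embedding_edges_meet[OF pe E(1,2) ne(1)] plane_embedding_edges_meet[OF pe E(2,3) ne(2)]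
      plane_embedding_edges_meet[OF pe E(1,3) ne(3)] h1 h2 h3 d by auto
  then have "simple_path (h1 +++ h2 +++ h3)"
    by (intro simple_path_join3I) (use h1 h2 h3 in auto)
  then show ?thesis
    using that[of "h1 +++ h2 +++ h3"] h1 h2 h3 by (auto simp: path_image_join)
qed

lemma three_faceD:
  assumes "three_face V E p g F T"
  shows "is_face V E p g F" "T \<subseteq> V" "card T = 3"
    "\<And>u v. u \<in> T \<Longrightarrow> v \<in> T \<Longrightarrow> u \<noteq> v \<Longrightarrow> {u, v} \<in> E"
    "frontier F = (\<Union>e\<in>{e\<in>E. e \<subseteq> T}. path_image (g e))"
  using assms unfolding three_face_def by simp_all

lemma three_face_edges:
  assumes pe: "plane_embedding V E p g" and tf: "three_face V E p g F {a, b, c}"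
    and d: "a \<noteq> b" "b \<noteq> c" "c \<noteq> a"
  shows "{a, b} \<in> E" "{b, c} \<in> E" "{c, a} \<in> E"
    and "frontier F = path_image (g {a, b}) \<union> path_image (g {b, c}) \<union> path_image (g {c, a})"
proof -
  show E: "{a, b} \<in> E" "{b, c} \<in> E" "{c, a} \<in> E" using three_faceD(4)[OF tf] d by blast+
  have "e \<in> {{a, b}, {b, c}, {c, a}}" if "e \<in> E" "e \<subseteq> {a, b, c}" for e
  proof -
    obtain u v where "e = {u, v}" "u \<noteq> v"
      using simple_graph_edgeE[OF plane_embedding_simple_graph[OF pe] \<open>e \<in> E\<close>] .
    then show ?thesis using that(2) by (auto simp: doubleton_eq_iff)
  qed
  then have "{e\<in>E. e \<subseteq> {a, b, c}} = {{a, b}, {b, c}, {c, a}}" using E by blast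
  then show "frontier F = path_image (g {a, b}) \<union> path_image (g {b, c}) \<union> path_image (g {c, a})"
    using three_faceD(5)[OF tf] by (simp add: Un_assoc)
qed

lemma is_face_in_complement:
  assumes "is_face V E p g F"
  shows "connected F" "F \<noteq> {}" "F \<subseteq> - drawing V E p g"
proof -
  obtain x where x: "x \<notin> drawing V E p g" "F = connected_component_set (- drawing V E p g) x"
    using assms unfolding is_face_def by blast
  then show "connected F" "F \<subseteq> - drawing V E p g"
    using connected_component_subset by auto
  have "x \<in> F" using x by (simp add: connected_component_refl)
  then show "F \<noteq> {}" by blast
qed

lemma three_faces_same_triangle_cover_vertices:
  assumes pe: "plane_embedding V E p g"
    and F1: "three_face V E p g F1 T" and F2: "three_face V E p g F2 T" and "F1 \<noteq> F2"
  shows "V \<subseteq> T"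
proof
  fix v assume v: "v \<in> V"
  obtain a b c where abc: "T = {a, b, c}" "a \<noteq> b" "b \<noteq> c" "c \<noteq> a"
    using three_faceD(3)[OF F1] card_3_iff by metis
  note edges = three_face_edges[OF pe _ abc(2-4), folded abc(1)]
  define C where "C = path_image (g {a, b}) \<union> path_image (g {b, c}) \<union> path_image (g {c, a})"
  obtain h where h: "simple_path h" "pathfinish h = pathstart h" "path_image h = C"
    using plane_embedding_triangle_simple_loop[OF pe edges(1-3)[OF F1] abc(2-4)]
    unfolding C_def by blast
  have CD: "C \<subseteq> drawing V E p g"
    unfolding C_def drawing_def using edges(1-3)[OF F1] by blast
  have side: "F = inside C \<or> F = outside C" if tf: "three_face V E p g F T" for F
  proof -
    note face = three_faceD(1)[OF tf]
    have "frontier F = path_image h" using edges(4)[OF tf] h(3) unfolding C_def by simp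
    moreover have "F \<inter> path_image h = {}" using is_face_in_complement(3)[OF face] CD h(3) by blast
    ultimately show ?thesis
      using connected_frontier_eq_Jordan_inside_or_outside[OF h(1,2)] is_face_in_complement[OF face]
      unfolding h(3) by blast
  qed
  have "F1 \<union> F2 = - C"
    using side[OF F1] side[OF F2] \<open>F1 \<noteq> F2\<close> inside_Un_outside[of C] by blast
  moreover have "F1 \<union> F2 \<subseteq> - drawing V E p g"
    using is_face_in_complement(3)[OF three_faceD(1)[OF F1]]
      is_face_in_complement(3)[OF three_faceD(1)[OF F2]] by (rule Un_least)
  ultimately have "p v \<in> C" using v unfolding drawing_def by blast
  then obtain e where e: "e \<in> {{a, b}, {b, c}, {c, a}}" "p v \<in> path_image (g e)"
    unfolding C_def by blast
  moreover have "{{a, b}, {b, c}, {c, a}} \<subseteq> E"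
    using edges(1-3)[OF F1] by blast
  ultimately have "v \<in> e" using plane_embedding_vertex_on_edge[OF pe _ v] by blast
  then show "v \<in> T" using e(1) abc(1) by auto
qed

definition triangle_in :: "'a set \<Rightarrow> 'a set set \<Rightarrow> 'a \<Rightarrow> 'a \<Rightarrow> 'a \<Rightarrow> bool" where
  "triangle_in V E a b c \<longleftrightarrow>
     distinct [a, b, c] \<and> {a, b, c} \<subseteq> V \<and> {a, b} \<in> E \<and> {b, c} \<in> E \<and> {a, c} \<in> E"

text \<open>The vertices \<open>w\<close> and \<open>x\<close> are the two of degree 3, matching the convention of
  \<^const>\<open>has_C3_Theta4\<close>.\<close>
definition theta4_in :: "'a set \<Rightarrow> 'a set set \<Rightarrow> 'a \<Rightarrow> 'a \<Rightarrow> 'a \<Rightarrow> 'a \<Rightarrow> bool" where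
  "theta4_in V E w x y z \<longleftrightarrow>
     distinct [w, x, y, z] \<and> {w, x, y, z} \<subseteq> V \<and>
     {w, x} \<in> E \<and> {w, y} \<in> E \<and> {w, z} \<in> E \<and> {x, y} \<in> E \<and> {x, z} \<in> E"

lemma triangle_meets_theta4:
  assumes "\<not> has_C3_Theta4 V E" "triangle_in V E a b c" "theta4_in V E w x y z"
  shows "{a, b, c} \<inter> {w, x, y, z} \<noteq> {}"
proof
  assume "{a, b, c} \<inter> {w, x, y, z} = {}"
  then have "distinct [a, b, c, w, x, y, z] \<and> {a, b, c, w, x, y, z} \<subseteq> V \<and>
      {a, b} \<in> E \<and> {b, c} \<in> E \<and> {a, c} \<in> E \<and>
      {w, x} \<in> E \<and> {w, y} \<in> E \<and> {w, z} \<in> E \<and> {x, y} \<in> E \<and> {x, z} \<in> E"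
    using assms(2,3) unfolding triangle_in_def theta4_in_def by auto
  then have "has_C3_Theta4 V E"
    unfolding has_C3_Theta4_def by (intro exI) assumption
  then show False using assms(1) by blast
qed

lemma theta4_in_triangles:
  assumes "theta4_in V E w x y z"
  shows "triangle_in V E w x y" "triangle_in V E w x z"
  using assms unfolding theta4_in_def triangle_in_def by auto

lemma theta4_pair_share_two_vertices:
  assumes no: "\<not> has_C3_Theta4 V E"
    and th1: "theta4_in V E a b c d" and th2: "theta4_in V E x y z w"
    and disj: "{a, b} \<inter> {x, y} = {}"
  shows "card ({a, b, c, d} \<inter> {x, y, z, w}) \<ge> 2"
proof (rule ccontr)
  define I where "I = {a, b, c, d} \<inter> {x, y, z, w}"
  assume "\<not> ?thesis"
  then have "card I \<le> Suc 0" unfolding I_def by linarith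
  moreover have "finite I" unfolding I_def by blast
  ultimately have single: "u = v" if "u \<in> I" "v \<in> I" for u v
    using that card_le_Suc0_iff_eq by blast
  obtain u1 where u1: "u1 \<in> {x, y, z}" "u1 \<in> I"
    using triangle_meets_theta4[OF no theta4_in_triangles(1)[OF th2] th1] unfolding I_def by blast
  obtain u2 where u2: "u2 \<in> {x, y, w}" "u2 \<in> I"
    using triangle_meets_theta4[OF no theta4_in_triangles(2)[OF th2] th1] unfolding I_def by blast
  obtain u3 where u3: "u3 \<in> {a, b, c}" "u3 \<in> I"
    using triangle_meets_theta4[OF no theta4_in_triangles(1)[OF th1] th2] unfolding I_def by blast
  obtain u4 where u4: "u4 \<in> {a, b, d}" "u4 \<in> I"
    using triangle_meets_theta4[OF no theta4_in_triangles(2)[OF th1] th2] unfolding I_def by blast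
  have "u2 = u1" "u3 = u1" "u4 = u1" using single u1(2) u2(2) u3(2) u4(2) by blast+
  moreover have "z \<noteq> w" "c \<noteq> d" using th1 th2 unfolding theta4_in_def by auto
  ultimately have "u1 \<in> {x, y}" "u1 \<in> {a, b}" using u1(1) u2(1) u3(1) u4(1) by auto
  then show False using disj by blast
qed

lemma two_three_faces_at_edge_theta4:
  assumes pe: "plane_embedding V E p g" and "card V > 3"
    and "F1 \<noteq> F2" "three_face V E p g F1 T1" "three_face V E p g F2 T2"
    and "e \<in> E" "e \<subseteq> T1" "e \<subseteq> T2"
  obtains a b c d where "e = {a, b}" "T1 \<union> T2 = {a, b, c, d}" "theta4_in V E a b c d"
proof -
  note tri1 = three_faceD[OF assms(4)] and tri2 = three_faceD[OF assms(5)]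
  have "T1 \<noteq> T2"
  proof
    assume "T1 = T2"
    then have "V \<subseteq> T1"
      using three_faces_same_triangle_cover_vertices[OF pe assms(4) _ assms(3)] assms(5) by simp
    moreover have "finite T1" using tri1(3) by (simp add: card_ge_0_finite)
    ultimately have "card V \<le> 3" using card_mono tri1(3) by metis
    then show False using \<open>card V > 3\<close> by simp
  qed
  obtain a b where ab: "e = {a, b}" "a \<noteq> b"
    by (rule simple_graph_edgeE[OF plane_embedding_simple_graph[OF pe] \<open>e \<in> E\<close>])
  have apex: "\<exists>c. T = {a, b, c} \<and> c \<notin> {a, b}" if "card T = 3" "e \<subseteq> T" for T :: "'a set"
  proof -
    have "card (T - e) = 1"
      using that card_Diff_subset[of e T] ab by (simp add: card.infinite)
    then obtain c where "T - e = {c}" using card_1_singletonE by blast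
    then show ?thesis using that(2) ab by auto
  qed
  obtain c d where T1: "T1 = {a, b, c}" "c \<notin> {a, b}" and T2: "T2 = {a, b, d}" "d \<notin> {a, b}"
    using apex[OF tri1(3) \<open>e \<subseteq> T1\<close>] apex[OF tri2(3) \<open>e \<subseteq> T2\<close>] by blast
  have "c \<noteq> d" using \<open>T1 \<noteq> T2\<close> T1(1) T2(1) by blast
  then have "distinct [a, b, c, d]" using T1(2) T2(2) ab(2) by auto
  moreover have "{a, b, c, d} \<subseteq> V" using tri1(2) tri2(2) T1(1) T2(1) by blast
  moreover have "{a, b} \<in> E" "{a, c} \<in> E" "{b, c} \<in> E"
    using tri1(4)[unfolded T1(1)] T1(2) ab(2) by blast+
  moreover have "{a, d} \<in> E" "{b, d} \<in> E"
    using tri2(4)[unfolded T2(1)] T2(2) by blast+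
  ultimately have "theta4_in V E a b c d" unfolding theta4_in_def by blast
  moreover have "T1 \<union> T2 = {a, b, c, d}" using T1(1) T2(1) by blast
  ultimately show ?thesis using that ab(1) by blast
qed

theorem lemma5:
  fixes V :: "'a set" and E :: "'a set set"
    and p :: "'a \<Rightarrow> complex" and g :: "'a set \<Rightarrow> real \<Rightarrow> complex"
  assumes "plane_embedding V E p g"
    and "card V \<ge> 174"
    and "\<not> has_C3_Theta4 V E"
    and "e \<in> EI V E p g" and "f \<in> EI V E p g" and "e \<inter> f = {}"
    and "F1 \<noteq> F2" and "three_face V E p g F1 T1" and "three_face V E p g F2 T2"
    and "e \<subseteq> T1" and "e \<subseteq> T2"
    and "H1 \<noteq> H2" and "three_face V E p g H1 S1" and "three_face V E p g H2 S2"
    and "f \<subseteq> S1" and "f \<subseteq> S2"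
  shows "card ((T1 \<union> T2) \<inter> (S1 \<union> S2)) \<ge> 2"
proof -
  have "card V > 3" "e \<in> E" "f \<in> E" using assms(2,4,5) unfolding EI_def by auto
  obtain a b c d where e: "e = {a, b}" and T: "T1 \<union> T2 = {a, b, c, d}"
    and th1: "theta4_in V E a b c d"
    using two_three_faces_at_edge_theta4[OF assms(1) \<open>card V > 3\<close> assms(7-9) \<open>e \<in> E\<close> assms(10,11)] .
  obtain x y z w where f: "f = {x, y}" and S: "S1 \<union> S2 = {x, y, z, w}"
    and th2: "theta4_in V E x y z w"
    using two_three_faces_at_edge_theta4[OF assms(1) \<open>card V > 3\<close> assms(12-14) \<open>f \<in> E\<close> assms(15,16)] .
  show ?thesis
    unfolding T S by (rule theta4_pair_share_two_vertices[OF assms(3) th1 th2 assms(6)[unfolded e f]])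
qed

end
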